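(* Let $m,n\in\mathbb{R}$ with $m\neq 0$, and let $(G_1,g,J)$ be the three-dimensional Lorentzian Lie group described in the context. Then $(G_1,g,J)$ admits no nonzero left-invariant Ricci collineation associated to the Yano connection $\nabla^{*}$: if $\xi=\lambda_1\overline{e}_1+\lambda_2\overline{e}_2+\lambda_3\overline{e}_3$ ($\lambda_i\in\mathbb{R}$ constants) satisfies $\mathrm{L}_{\xi}\overline{\mathrm{Ric}^{*}}=0$, then $\lambda_1=\lambda_2=\lambda_3=0$.
   Context: $G_1$ is a connected three-dimensional Lie group whose Lie algebra has a basis $\{\overline{e}_1,\overline{e}_2,\overline{e}_3\}$ (viewed as left-invariant vector fields) with $[\overline{e}_1,\overline{e}_2]=m\overline{e}_1-n\overline{e}_3$, $[\overline{e}_1,\overline{e}_3]=-m\overline{e}_1-n\overline{e}_2$, $[\overline{e}_2,\overline{e}_3]=n\overline{e}_1+m\overline{e}_2+m\overline{e}_3$. The metric $g$ is the left-invariant Lorentzian metric for which $\{\overline{e}_1,\overline{e}_2,\overline{e}_3\}$ is pseudo-orthonormal with $\overline{e}_3$ timelike: $g(\overline{e}_1,\overline{e}_1)=g(\overline{e}_2,\overline{e}_2)=1$, $g(\overline{e}_3,\overline{e}_3)=-1$, $g(\overline{e}_i,\overline{e}_j)=0$ for $i\neq j$. $J$ is the left-invariant product structure with $J\overline{e}_1=\overline{e}_1$, $J\overline{e}_2=\overline{e}_2$, $J\overline{e}_3=-\overline{e}_3$. With $\nabla^{LC}$ the Levi-Civita connection of $g$, the Yano connection is $\nabla^{*}_XY=\nabla^{LC}_XY-\frac12(\nabla^{LC}_YJ)JX-\frac14[(\nabla^{LC}_XJ)JY-(\nabla^{LC}_{JX}J)Y]$.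 Its curvature is $R^{*}(X,Y)Z=\nabla^{*}_X\nabla^{*}_YZ-\nabla^{*}_Y\nabla^{*}_XZ-\nabla^{*}_{[X,Y]}Z$, its Ricci tensor is $\mathrm{Ric}^{*}(X,Y)=-g(R^{*}(X,\overline{e}_1)Y,\overline{e}_1)-g(R^{*}(X,\overline{e}_2)Y,\overline{e}_2)+g(R^{*}(X,\overline{e}_3)Y,\overline{e}_3)$, and $\overline{\mathrm{Ric}^{*}}(X,Y)=\frac12(\mathrm{Ric}^{*}(X,Y)+\mathrm{Ric}^{*}(Y,X))$. For a left-invariant vector field $\xi$, $(\mathrm{L}_{\xi}\overline{\mathrm{Ric}^{*}})(X,Y)=\xi(\overline{\mathrm{Ric}^{*}}(X,Y))-\overline{\mathrm{Ric}^{*}}([\xi,X],Y)-\overline{\mathrm{Ric}^{*}}(X,[\xi,Y])$; $\xi$ is a left-invariant Ricci collineation (associated to $\nabla^{*}$) if $\mathrm{L}_{\xi}\overline{\mathrm{Ric}^{*}}=0$. *)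

theory Defs
  imports "HOL-Analysis.Analysis"
begin

text \<open>Left-invariant vector fields on G_1 are identified with their coefficient
vectors in real^3 with respect to the basis e_1, e_2, e_3.\<close>

definition ebas :: "3 \<Rightarrow> real^3" where
  "ebas i = axis i 1"

definition br12 :: "real \<Rightarrow> real \<Rightarrow> real^3" where
  "br12 m n = m *\<^sub>R ebas 1 - n *\<^sub>R ebas 3"
definition br13 :: "real \<Rightarrow> real \<Rightarrow> real^3" where
  "br13 m n = - (m *\<^sub>R ebas 1) - n *\<^sub>R ebas 2"
definition br23 :: "real \<Rightarrow> real \<Rightarrow> real^3" where
  "br23 m n = n *\<^sub>R ebas 1 + m *\<^sub>R ebas 2 + m *\<^sub>R ebas 3"

definition brb :: "real \<Rightarrow> real \<Rightarrow> 3 \<Rightarrow> 3 \<Rightarrow> real^3" where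
  "brb m n i j =
     (if i = 1 \<and> j = 2 then br12 m n
      else if i = 2 \<and> j = 1 then - br12 m n
      else if i = 1 \<and> j = 3 then br13 m n
      else if i = 3 \<and> j = 1 then - br13 m n
      else if i = 2 \<and> j = 3 then br23 m n
      else if i = 3 \<and> j = 2 then - br23 m n
      else 0)"

definition lieb :: "real \<Rightarrow> real \<Rightarrow> real^3 \<Rightarrow> real^3 \<Rightarrow> real^3" where
  "lieb m n X Y = (\<Sum>i\<in>UNIV. \<Sum>j\<in>UNIV. (X$i * Y$j) *\<^sub>R brb m n i j)"

text \<open>Lorentzian metric, e_3 timelike.\<close>
definition gL :: "real^3 \<Rightarrow> real^3 \<Rightarrow> real" where
  "gL X Y = X$1 * Y$1 + X$2 * Y$2 - X$3 * Y$3"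

definition Jop :: "real^3 \<Rightarrow> real^3" where
  "Jop X = (\<chi> k. if k = 3 then - X$k else X$k)"

text \<open>Levi-Civita connection on left-invariant fields via the Koszul formula
  2 g(\<nabla>_X Y, Z) = g([X,Y],Z) - g([Y,Z],X) + g([Z,X],Y)
  (the derivative terms vanish since g of left-invariant fields is constant).\<close>
definition LC :: "real \<Rightarrow> real \<Rightarrow> real^3 \<Rightarrow> real^3 \<Rightarrow> real^3" where
  "LC m n X Y = (\<Sum>k\<in>UNIV. (gL (ebas k) (ebas k) * (1/2) *
      (gL (lieb m n X Y) (ebas k) - gL (lieb m n Y (ebas k)) X + gL (lieb m n (ebas k) X) Y))
      *\<^sub>R ebas k)"

definition nablaJ :: "real \<Rightarrow> real \<Rightarrow> real^3 \<Rightarrow> real^3 \<Rightarrow> real^3" where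
  "nablaJ m n X Y = LC m n X (Jop Y) - Jop (LC m n X Y)"

definition Yano :: "real \<Rightarrow> real \<Rightarrow> real^3 \<Rightarrow> real^3 \<Rightarrow> real^3" where
  "Yano m n X Y = LC m n X Y - (1/2) *\<^sub>R nablaJ m n Y (Jop X)
      - (1/4) *\<^sub>R (nablaJ m n X (Jop Y) - nablaJ m n (Jop X) Y)"

definition Rstar :: "real \<Rightarrow> real \<Rightarrow> real^3 \<Rightarrow> real^3 \<Rightarrow> real^3 \<Rightarrow> real^3" where
  "Rstar m n X Y Z = Yano m n X (Yano m n Y Z) - Yano m n Y (Yano m n X Z)
      - Yano m n (lieb m n X Y) Z"

definition Ricstar :: "real \<Rightarrow> real \<Rightarrow> real^3 \<Rightarrow> real^3 \<Rightarrow> real" where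
  "Ricstar m n X Y = - gL (Rstar m n X (ebas 1) Y) (ebas 1)
      - gL (Rstar m n X (ebas 2) Y) (ebas 2) + gL (Rstar m n X (ebas 3) Y) (ebas 3)"

definition RicstarSym :: "real \<Rightarrow> real \<Rightarrow> real^3 \<Rightarrow> real^3 \<Rightarrow> real" where
  "RicstarSym m n X Y = (Ricstar m n X Y + Ricstar m n Y X) / 2"

text \<open>Lie derivative of the symmetrized Ricci tensor along a left-invariant xi,
  evaluated on left-invariant X, Y. The term xi(RicSym(X,Y)) is the derivative of a
  constant function and hence 0.\<close>
definition LieRicstar :: "real \<Rightarrow> real \<Rightarrow> real^3 \<Rightarrow> real^3 \<Rightarrow> real^3 \<Rightarrow> real" where
  "LieRicstar m n \<xi> X Y = 0 - RicstarSym m n (lieb m n \<xi> X) Y - RicstarSym m n X (lieb m n \<xi> Y)"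

definition ricci_collineation :: "real \<Rightarrow> real \<Rightarrow> real^3 \<Rightarrow> bool" where
  "ricci_collineation m n \<xi> \<longleftrightarrow> (\<forall>X Y. LieRicstar m n \<xi> X Y = 0)"

end

theory Submission
  imports Defs
begin

(* All tensors involved are left-invariant, so they are determined by constant coefficients in
   the frame e_1, e_2, e_3. The Yano connection, its curvature and the symmetrized Ricci tensor
   are computed in this frame; evaluating L_xi Ric* on the pairs (e_1,e_1), (e_1,e_3), (e_2,e_2)
   gives a homogeneous linear system in lambda_1, lambda_2, lambda_3 with determinant
   m^5 (m^2 n^2 + 2 m^4 + 2 n^4), which is nonzero for m <> 0. *)

lemma ebas_nth: "ebas i $ k = (if k = i then 1 else 0)"
  by (simp add: ebas_def axis_def)

lemma lieb_nth:
  "lieb m n X Y $ 1 = m*(X$1*Y$2 - X$2*Y$1) - m*(X$1*Y$3 - X$3*Y$1) + n*(X$2*Y$3 - X$3*Y$2)"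
  "lieb m n X Y $ 2 = - n*(X$1*Y$3 - X$3*Y$1) + m*(X$2*Y$3 - X$3*Y$2)"
  "lieb m n X Y $ 3 = - n*(X$1*Y$2 - X$2*Y$1) + m*(X$2*Y$3 - X$3*Y$2)"
  by (simp_all add: lieb_def sum_3 brb_def br12_def br13_def br23_def ebas_nth algebra_simps)

lemma LC_nth:
  "LC m n X Y $ 1 = m*X$1*Y$2 - m*X$1*Y$3 + n/2*X$2*Y$3 - n/2*X$3*Y$2"
  "LC m n X Y $ 2 = - m*X$1*Y$1 - n/2*X$1*Y$3 + m*X$2*Y$3 + n/2*X$3*Y$1 - m*X$3*Y$3"
  "LC m n X Y $ 3 = - m*X$1*Y$1 - n/2*X$1*Y$2 + n/2*X$2*Y$1 + m*X$2*Y$2 - m*X$3*Y$2"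
  by (simp_all add: LC_def sum_3 gL_def lieb_nth ebas_nth algebra_simps)

lemma Yano_nth:
  "Yano m n X Y $ 1 = m*X$1*Y$2 + m*X$3*Y$1 - n*X$3*Y$2"
  "Yano m n X Y $ 2 = - m*X$1*Y$1 + n*X$3*Y$1 - m*X$3*Y$2"
  "Yano m n X Y $ 3 = - n*X$1*Y$2 + n*X$2*Y$1 + m*X$2*Y$3"
  by (simp_all add: Yano_def nablaJ_def LC_nth Jop_def algebra_simps)

lemma RicstarSym_expand:
  "RicstarSym m n X Y =
     - (n^2+m^2)*X$1*Y$1 + m*n*X$1*Y$2 - m*n/2*X$1*Y$3
     + m*n*X$2*Y$1 - (n^2+m^2)*X$2*Y$2 + m^2/2*X$2*Y$3
     - m*n/2*X$3*Y$1 + m^2/2*X$3*Y$2"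
  by (simp add: RicstarSym_def Ricstar_def Rstar_def gL_def Yano_nth lieb_nth ebas_nth
      algebra_simps power2_eq_square divide_simps)

lemma LieRicstar_basis:
  fixes l1 l2 l3 :: real
  defines "\<xi> \<equiv> l1 *\<^sub>R ebas 1 + l2 *\<^sub>R ebas 2 + l3 *\<^sub>R ebas 3"
  shows "LieRicstar m n \<xi> (ebas 1) (ebas 1) = 2*m^3*l3 - (m*n^2 + 2*m^3)*l2"
    and "LieRicstar m n \<xi> (ebas 1) (ebas 3) = n^3*l2 - m^3*l1"
    and "LieRicstar m n \<xi> (ebas 2) (ebas 2) = - (m^2*n*l1 + m^3*l3)"
  by (simp_all add: \<xi>_def LieRicstar_def RicstarSym_expand lieb_nth ebas_nth
      algebra_simps power2_eq_square power3_eq_cube divide_simps)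

lemma collineation_equations_imp_zero:
  fixes m n l1 l2 l3 :: real
  assumes "m \<noteq> 0"
    and e11: "2*m^3*l3 - (m*n^2 + 2*m^3)*l2 = 0"
    and e13: "n^3*l2 - m^3*l1 = 0"
    and e22: "m^2*n*l1 + m^3*l3 = 0"
  shows "l1 = 0 \<and> l2 = 0 \<and> l3 = 0"
proof -
  (* the multipliers form the second row of the adjugate of the coefficient matrix *)
  have "m^5 * (m^2*n^2 + 2*m^4 + 2*n^4) * l2
      = 2*m^5*n * (n^3*l2 - m^3*l1) - m^6 * (2*m^3*l3 - (m*n^2 + 2*m^3)*l2)
        + 2*m^6 * (m^2*n*l1 + m^3*l3)"
    by algebra
  also have "\<dots> = 0" by (simp add: e11 e13 e22)
  finally have "m^5 * (m^2*n^2 + 2*m^4 + 2*n^4) * l2 = 0" .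
  moreover have "m^2*n^2 + 2*m^4 + 2*n^4 > 0"
    using \<open>m \<noteq> 0\<close> by (simp add: add_nonneg_pos add_pos_nonneg)
  ultimately have "l2 = 0" using \<open>m \<noteq> 0\<close> by simp
  with e13 e22 \<open>m \<noteq> 0\<close> show ?thesis by simp
qed

theorem theorem3p3:
  fixes m n l1 l2 l3 :: real
  assumes "m \<noteq> 0"
    and "ricci_collineation m n (l1 *\<^sub>R ebas 1 + l2 *\<^sub>R ebas 2 + l3 *\<^sub>R ebas 3)"
  shows "l1 = 0 \<and> l2 = 0 \<and> l3 = 0"
proof -
  have "\<And>i j. LieRicstar m n (l1 *\<^sub>R ebas 1 + l2 *\<^sub>R ebas 2 + l3 *\<^sub>R ebas 3)
      (ebas i) (ebas j) = 0"
    using assms(2) by (simp add: ricci_collineation_def)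
  from this[of 1 1] this[of 1 3] this[of 2 2] show ?thesis
    unfolding LieRicstar_basis neg_equal_0_iff_equal
    by (rule collineation_equations_imp_zero[OF \<open>m \<noteq> 0\<close>])
qed

end
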